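(* Let $m,a,b,t\in\mathbb{N}$ with $m\geq 3$, $a\geq 1$, $t\in\{2,\ldots,m-1\}$ and $(t-1)(am+1)<bm+t<t(am+1)$, let $S=\langle m,\ am+1,\ bm+t\rangle$ (a MANS-semigroup with embedding dimension $3$), $q=\left\lfloor\frac{m-1}{t}\right\rfloor$ and $r=(m-1)\bmod t$. Then \[ \{q(bm+t)+r(am+1)\}\subseteq \mathrm{Maximals}_{\leq_S}(\mathrm{Ap}(S,m))\subseteq\{(q-1)(bm+t)+(t-1)(am+1),\ q(bm+t)+r(am+1)\} \] and, consequently, \[ \{q(bm+t)+r(am+1)-m\}\subseteq\mathrm{PF}(S)\subseteq\{(q-1)(bm+t)+(t-1)(am+1)-m,\ q(bm+t)+r(am+1)-m\}. \]
   Context: $\mathbb{N}=\{0,1,2,\ldots\}$. $\langle A\rangle$ is the submonoid of $(\mathbb{N},+)$ generated by $A$; a numerical semigroup is a submonoid of $\mathbb{N}$ with finite complement. For $n\in S\setminus\{0\}$, $\mathrm{Ap}(S,n)=\{s\in S:s-n\notin S\}$. On $\mathbb{Z}$, $x\leq_S y$ means $y-x\in S$ (a partial order); $\mathrm{Maximals}_{\leq_S}(X)$ is the set of maximal elements of $X$ for $\leq_S$. A pseudo-Frobenius number of $S$ is an $x\in\mathbb{Z}\setminus S$ with $x+s\in S$ for all $s\in S\setminus\{0\}$; $\mathrm{PF}(S)$ is the set of them. A MANS-semigroup is a numerical semigroup with $w(1)<\cdots<w(\mathrm{m}(S)-1)$, where $\mathrm{m}(S)$ is the least element of $S\setminus\{0\}$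 and $w(i)$ the least element of $S$ congruent to $i$ modulo $\mathrm{m}(S)$. $a\bmod b$ is the remainder of the division of $a$ by $b$. *)

theory Defs
  imports Main
begin

inductive_set monoid_gen :: "int set \<Rightarrow> int set" for A :: "int set" where
  zero: "0 \<in> monoid_gen A"
| add: "a \<in> A \<Longrightarrow> s \<in> monoid_gen A \<Longrightarrow> a + s \<in> monoid_gen A"

definition Apery :: "int set \<Rightarrow> int \<Rightarrow> int set" where
  "Apery S n = {s \<in> S. s - n \<notin> S}"

definition leq_S :: "int set \<Rightarrow> int \<Rightarrow> int \<Rightarrow> bool" where
  "leq_S S x y \<longleftrightarrow> y - x \<in> S"

definition Maximals :: "int set \<Rightarrow> int set \<Rightarrow> int set" where
  "Maximals S X = {x \<in> X. \<forall>y\<in>X. leq_S S x y \<longrightarrow> y = x}"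

definition PF :: "int set \<Rightarrow> int set" where
  "PF S = {x. x \<notin> S \<and> (\<forall>s\<in>S - {0}. x + s \<in> S)}"

end

theory Submission
  imports Defs
begin

(* Write n1 = am + 1 and n2 = bm + t.  As n1 = 1 and n2 = t modulo m, the element x m + y n1 + z n2
   of S is congruent to y + z t, and the bounds (t - 1) n1 < n2 < t n1 make
   w N = (N mod t) n1 + (N div t) n2 the least element of S congruent to N; moreover w is strictly
   increasing, so Ap(S, m) = {w 0 < ... < w (m - 1)}.  The element w M is not maximal as soon as
   w (M + 1) = w M + n1 (when t does not divide M + 1) or w (M + t) = w M + n2 lies in Ap(S, m);
   this leaves only M = m - 1 and M = q t - 1.  Finally, PF(S) is Maximals(Ap(S, m)) shifted by -m. *)

lemma monoid_gen_add_closed: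
  "s \<in> monoid_gen A \<Longrightarrow> s' \<in> monoid_gen A \<Longrightarrow> s + s' \<in> monoid_gen A"
  by (induction s rule: monoid_gen.induct) (auto simp: add.assoc intro: monoid_gen.add)

lemma monoid_gen_generator: "g \<in> A \<Longrightarrow> g \<in> monoid_gen A"
  using monoid_gen.add[OF _ monoid_gen.zero] by simp

lemma monoid_gen_mult_closed: "g \<in> A \<Longrightarrow> int k * g \<in> monoid_gen A"
proof (induction k)
  case 0
  then show ?case by (simp add: monoid_gen.zero)
next
  case (Suc k)
  then show ?case using monoid_gen.add[of g A "int k * g"] by (simp add: algebra_simps)
qed

lemma monoid_gen_three:
  "monoid_gen {g\<^sub>1, g\<^sub>2, g\<^sub>3} = {int x * g\<^sub>1 + int y * g\<^sub>2 + int z * g\<^sub>3 | x y z. True}"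
proof
  show "monoid_gen {g\<^sub>1, g\<^sub>2, g\<^sub>3} \<subseteq> {int x * g\<^sub>1 + int y * g\<^sub>2 + int z * g\<^sub>3 | x y z. True}"
  proof
    fix s assume "s \<in> monoid_gen {g\<^sub>1, g\<^sub>2, g\<^sub>3}"
    then show "s \<in> {int x * g\<^sub>1 + int y * g\<^sub>2 + int z * g\<^sub>3 | x y z. True}"
    proof (induction s rule: monoid_gen.induct)
      case zero
      show ?case by (auto intro!: exI[of _ 0])
    next
      case (add g s)
      then obtain x y z where "s = int x * g\<^sub>1 + int y * g\<^sub>2 + int z * g\<^sub>3" by blast
      then have "g + s = int (Suc x) * g\<^sub>1 + int y * g\<^sub>2 + int z * g\<^sub>3 \<or>
                 g + s = int x * g\<^sub>1 + int (Suc y) * g\<^sub>2 + int z * g\<^sub>3 \<or>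
                 g + s = int x * g\<^sub>1 + int y * g\<^sub>2 + int (Suc z) * g\<^sub>3"
        using add.hyps(1) by (auto simp: algebra_simps)
      then show ?case by blast
    qed
  qed
  show "{int x * g\<^sub>1 + int y * g\<^sub>2 + int z * g\<^sub>3 | x y z. True} \<subseteq> monoid_gen {g\<^sub>1, g\<^sub>2, g\<^sub>3}"
    by (auto intro!: monoid_gen_add_closed monoid_gen_mult_closed)
qed

lemma PF_iff_Maximals_Apery:
  assumes add_closed: "\<And>x y. x \<in> S \<Longrightarrow> y \<in> S \<Longrightarrow> x + y \<in> S"
    and "n \<in> S" "n \<noteq> 0"
  shows "x \<in> PF S \<longleftrightarrow> x + n \<in> Maximals S (Apery S n)"
proof
  assume x: "x \<in> PF S"
  then have x_plus: "x + s \<in> S" if "s \<in> S" "s \<noteq> 0" for s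
    using that by (auto simp: PF_def)
  have "x + n \<in> Apery S n"
    using x x_plus[OF assms(2,3)] by (simp add: Apery_def PF_def)
  moreover have "y = x + n" if "y \<in> Apery S n" "leq_S S (x + n) y" for y
  proof (rule ccontr)
    assume "y \<noteq> x + n"
    then have "y - n \<in> S"
      using that(2) x_plus[of "y - (x + n)"] by (simp add: leq_S_def)
    then show False
      using that(1) by (simp add: Apery_def)
  qed
  ultimately show "x + n \<in> Maximals S (Apery S n)"
    by (simp add: Maximals_def)
next
  assume max: "x + n \<in> Maximals S (Apery S n)"
  then have "x + n \<in> S" "x \<notin> S"
    by (auto simp: Maximals_def Apery_def)
  moreover have "x + s \<in> S" if "s \<in> S" "s \<noteq> 0" for s
  proof (rule ccontr)
    assume "x + s \<notin> S"
    then have "x + n + s \<in> Apery S n"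
      using add_closed[OF \<open>x + n \<in> S\<close> that(1)] by (simp add: Apery_def algebra_simps)
    with max that show False
      by (auto simp: Maximals_def leq_S_def)
  qed
  ultimately show "x \<in> PF S"
    by (simp add: PF_def)
qed

lemma PF_eq_Maximals_Apery:
  assumes "\<And>x y. x \<in> S \<Longrightarrow> y \<in> S \<Longrightarrow> x + y \<in> S" "n \<in> S" "n \<noteq> 0"
  shows "PF S = (\<lambda>x. x - n) ` Maximals S (Apery S n)"
  using PF_iff_Maximals_Apery[OF assms] by (auto simp: image_iff intro!: bexI[of _ "_ + n"])

locale mans_three_generated =
  fixes m a b t :: nat
  assumes t_ge_2: "2 \<le> t" and t_lt_m: "t \<le> m - 1"
    and n2_lower: "(t - 1) * (a * m + 1) < b * m + t" and n2_upper: "b * m + t < t * (a * m + 1)"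
begin

definition n1 :: int where "n1 = int (a * m + 1)"
definition n2 :: int where "n2 = int (b * m + t)"

abbreviation S :: "int set" where "S \<equiv> monoid_gen {int m, n1, n2}"

(* For N < m this is the paper's w(N): among the sums y n1 + z n2 with y + z t = N, the one
   using as many copies of n2 as possible is the smallest, because n2 < t n1. *)
definition w :: "nat \<Rightarrow> int" where "w N = int (N mod t) * n1 + int (N div t) * n2"

lemma m_pos: "m > 0"
  using t_ge_2 t_lt_m by linarith

lemma n1_pos: "n1 > 0"
  unfolding n1_def by (simp add: add_pos_nonneg)

lemma n2_gt: "int (t - 1) * n1 < n2"
  using n2_lower unfolding n1_def n2_def by (metis of_nat_less_iff of_nat_mult)

lemma n2_lt: "n2 < int t * n1"
  using n2_upper unfolding n1_def n2_def by (metis of_nat_less_iff of_nat_mult)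

lemma w_eq: "e < t \<Longrightarrow> w (e + d * t) = int e * n1 + int d * n2"
  by (simp add: w_def)

lemma w_add_mult_t: "w (N + d * t) = w N + int d * n2"
  using t_ge_2 by (simp add: w_def algebra_simps)

lemma w_Suc: "Suc (N mod t) < t \<Longrightarrow> w (Suc N) = w N + n1"
  using w_eq[of "Suc (N mod t)" "N div t"] w_eq[of "N mod t" "N div t"]
  by (simp add: algebra_simps)

lemma block_end:
  assumes "\<not> Suc (N mod t) < t"
  shows "N mod t = t - 1" "Suc N = Suc (N div t) * t"
proof -
  show "N mod t = t - 1"
    using assms mod_less_divisor[of t N] t_ge_2 by linarith
  then show "Suc N = Suc (N div t) * t"
    using div_mult_mod_eq[of N t] t_ge_2 by simp
qed

lemma w_Suc_gt: "w N < w (Suc N)"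
proof (cases "Suc (N mod t) < t")
  case True
  then show ?thesis using w_Suc n1_pos by simp
next
  case False
  have "w N = int (t - 1) * n1 + int (N div t) * n2"
    using block_end(1)[OF False] by (simp add: w_def)
  moreover have "w (Suc N) = int (Suc (N div t)) * n2"
    using block_end(2)[OF False] w_eq[of 0 "Suc (N div t)"] t_ge_2 by simp
  ultimately show ?thesis
    using n2_gt by (simp add: algebra_simps)
qed

lemma w_strict_mono: "strict_mono w"
  using w_Suc_gt strict_mono_Suc_iff by blast

lemma w_le: "w N \<le> int N * n1"
proof -
  have "int (N div t) * n2 \<le> int (N div t) * (int t * n1)"
    using n2_lt by (intro mult_left_mono) auto
  moreover have "int N = int (N mod t) + int (N div t) * int t"
    by (metis of_nat_add of_nat_mult mod_div_mult_eq)
  ultimately show ?thesis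
    unfolding w_def by (simp add: algebra_simps)
qed

lemma w_cong: "int m dvd w N - int N"
proof -
  have "int N = int (N mod t) + int (N div t) * int t"
    by (metis of_nat_add of_nat_mult mod_div_mult_eq)
  then have "w N - int N = int m * (int a * int (N mod t) + int b * int (N div t))"
    unfolding w_def n1_def n2_def by (simp add: algebra_simps)
  then show ?thesis by simp
qed

lemma w_in_S: "w N \<in> S"
  unfolding w_def by (intro monoid_gen_add_closed monoid_gen_mult_closed) simp_all

lemma S_nonneg: "s \<in> S \<Longrightarrow> s \<ge> 0"
  by (auto simp: monoid_gen_three n1_def n2_def)

lemma S_decompose:
  assumes "s \<in> S"
  obtains N j where "N < m" "s = w N + int j * int m"
proof -
  obtain x y z where s: "s = int x * int m + int y * n1 + int z * n2"
    using assms by (auto simp: monoid_gen_three)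
  define N where "N = (y + z * t) mod m"
  have "N < m"
    using m_pos by (simp add: N_def)
  have "w N \<le> w (y + z * t)"
    using strict_mono_less_eq[OF w_strict_mono] by (simp add: N_def)
  also have "\<dots> \<le> int y * n1 + int z * n2"
    using w_add_mult_t[of y z] w_le[of y] by simp
  finally have "s - w N \<ge> 0"
    using s zero_le_mult_iff[of "int x" "int m"] by linarith
  have "s - int (y + z * t) = int m * (int x + int y * int a + int z * int b)"
    unfolding s n1_def n2_def by (simp add: algebra_simps)
  moreover have "int m dvd int (y + z * t) - int N"
    unfolding N_def by (simp add: mod_eq_dvd_iff[symmetric] zmod_int)
  moreover have "s - w N = (s - int (y + z * t)) + (int (y + z * t) - int N) - (w N - int N)"
    by simp
  ultimately have "int m dvd s - w N"
    using w_cong[of N] by (metis dvd_add dvd_diff dvd_triv_left)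
  then obtain j where "s - w N = int m * j" by (elim dvdE)
  with \<open>s - w N \<ge> 0\<close> m_pos have "s = w N + int (nat j) * int m"
    by (simp add: zero_le_mult_iff algebra_simps)
  with \<open>N < m\<close> show thesis by (rule that)
qed

lemma w_inj_mod:
  assumes "N < m" "N' < m" "int m dvd w N - w N'"
  shows "N = N'"
proof -
  have "w N - w N' = (w N - int N) - (w N' - int N') + (int N - int N')"
    by simp
  then have "int m dvd int N - int N'"
    using assms(3) w_cong[of N] w_cong[of N'] by (metis dvd_add_right_iff dvd_diff)
  then have "int N mod int m = int N' mod int m"
    by (simp add: mod_eq_dvd_iff)
  with assms(1,2) show ?thesis
    by (simp add: zmod_int)
qed

lemma Apery_eq: "Apery S (int m) = w ` {..<m}"
proof
  show "Apery S (int m) \<subseteq> w ` {..<m}"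
  proof
    fix s assume s: "s \<in> Apery S (int m)"
    then obtain N j where "N < m" and s_eq: "s = w N + int j * int m"
      using S_decompose by (auto simp: Apery_def)
    have "j = 0"
    proof (rule ccontr)
      assume "j \<noteq> 0"
      then have "s - int m = w N + int (j - 1) * int m"
        using s_eq by (simp add: of_nat_diff algebra_simps)
      then have "s - int m \<in> S"
        using w_in_S by (simp add: monoid_gen_add_closed monoid_gen_mult_closed)
      with s show False
        by (simp add: Apery_def)
    qed
    with \<open>N < m\<close> s_eq show "s \<in> w ` {..<m}"
      by simp
  qed
  show "w ` {..<m} \<subseteq> Apery S (int m)"
  proof
    fix s assume "s \<in> w ` {..<m}"
    then obtain N where "N < m" and s: "s = w N" by blast
    have "w N - int m \<notin> S"
    proof
      assume "w N - int m \<in> S"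
      then obtain N' j where "N' < m" and eq: "w N - int m = w N' + int j * int m"
        by (rule S_decompose)
      then have diff: "w N - w N' = int m * (int j + 1)"
        by (simp add: algebra_simps)
      then have "int m dvd w N - w N'"
        by simp
      with \<open>N < m\<close> \<open>N' < m\<close> have "N = N'"
        by (rule w_inj_mod)
      with diff m_pos show False
        by simp
    qed
    with s show "s \<in> Apery S (int m)"
      using w_in_S by (simp add: Apery_def)
  qed
qed

lemma leq_S_w_imp_le: "leq_S S (w N) (w N') \<Longrightarrow> N \<le> N'"
  using S_nonneg strict_mono_less_eq[OF w_strict_mono] by (force simp: leq_S_def)

lemma w_last_in_Maximals: "w (m - 1) \<in> Maximals S (Apery S (int m))"
proof -
  have "N = m - 1" if "N < m" "leq_S S (w (m - 1)) (w N)" for N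
    using that leq_S_w_imp_le[of "m - 1" N] by linarith
  then show ?thesis
    using m_pos by (auto simp: Maximals_def Apery_eq)
qed

lemma w_step_up:
  assumes "Suc M < m" "M \<noteq> (m - 1) div t * t - 1"
  obtains M' where "M < M'" "M' < m" "w M' - w M \<in> S"
proof (cases "Suc (M mod t) < t")
  case True
  with assms(1) show thesis
    using that[of "Suc M"] w_Suc by (simp add: monoid_gen_generator)
next
  case False
  show thesis
  proof (cases "M + t < m")
    case True
    with t_ge_2 show thesis
      using that[of "M + t"] w_add_mult_t[of M 1] by (simp add: monoid_gen_generator)
  next
    case False
    have "Suc M = Suc (M div t) * t"
      using \<open>\<not> Suc (M mod t) < t\<close> by (rule block_end(2))
    moreover have "(m - 1) div t = Suc (M div t)"
      using assms(1) \<open>\<not> M + t < m\<close> \<open>Suc M = Suc (M div t) * t\<close>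
      by (intro div_nat_eqI) (simp_all add: algebra_simps)
    ultimately show thesis
      using assms(2) by simp
  qed
qed

lemma Maximals_Apery_subset:
  "Maximals S (Apery S (int m)) \<subseteq> {w (m - 1), w ((m - 1) div t * t - 1)}"
proof
  fix y assume y: "y \<in> Maximals S (Apery S (int m))"
  then obtain M where "M < m" and "y = w M"
    by (auto simp: Maximals_def Apery_eq)
  show "y \<in> {w (m - 1), w ((m - 1) div t * t - 1)}"
  proof (rule ccontr)
    assume "y \<notin> {w (m - 1), w ((m - 1) div t * t - 1)}"
    with \<open>M < m\<close> \<open>y = w M\<close> have "Suc M < m" "M \<noteq> (m - 1) div t * t - 1"
      by (auto simp: strict_mono_eq[OF w_strict_mono])
    then obtain M' where "M < M'" "M' < m" "w M' - w M \<in> S"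
      by (rule w_step_up)
    with y \<open>y = w M\<close> have "w M' = w M"
      by (auto simp: Maximals_def Apery_eq leq_S_def)
    with \<open>M < M'\<close> show False
      using w_strict_mono by (simp add: strict_mono_eq)
  qed
qed

lemma w_last: "w (m - 1) = int ((m - 1) div t * (b * m + t) + (m - 1) mod t * (a * m + 1))"
  unfolding w_def n1_def n2_def by (simp only: of_nat_add of_nat_mult ac_simps)

lemma w_last_block_end:
  "w ((m - 1) div t * t - 1) = (int ((m - 1) div t) - 1) * int (b * m + t) + int (t - 1) * int (a * m + 1)"
proof -
  have "(m - 1) div t \<ge> 1"
    using div_le_mono[OF t_lt_m, of t] t_ge_2 by simp
  then have "(m - 1) div t * t - 1 = (t - 1) + ((m - 1) div t - 1) * t"
    using t_ge_2 by (simp add: diff_mult_distrib)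
  then show ?thesis
    using w_eq[of "t - 1" "(m - 1) div t - 1"] t_ge_2 \<open>(m - 1) div t \<ge> 1\<close>
    by (simp add: n1_def n2_def of_nat_diff)
qed

end

theorem lemma3p20:
  fixes m a b t :: nat
  assumes "m \<ge> 3" "a \<ge> 1" "2 \<le> t" "t \<le> m - 1"
    and "(t - 1) * (a * m + 1) < b * m + t" "b * m + t < t * (a * m + 1)"
  defines "S \<equiv> monoid_gen {int m, int (a * m + 1), int (b * m + t)}"
    and "q \<equiv> (m - 1) div t" and "r \<equiv> (m - 1) mod t"
  shows "{int (q * (b * m + t) + r * (a * m + 1))} \<subseteq> Maximals S (Apery S (int m))
         \<and> Maximals S (Apery S (int m)) \<subseteq>
             {(int q - 1) * int (b * m + t) + int (t - 1) * int (a * m + 1),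
              int (q * (b * m + t) + r * (a * m + 1))}
         \<and> {int (q * (b * m + t) + r * (a * m + 1)) - int m} \<subseteq> PF S
         \<and> PF S \<subseteq>
             {(int q - 1) * int (b * m + t) + int (t - 1) * int (a * m + 1) - int m,
              int (q * (b * m + t) + r * (a * m + 1)) - int m}"
proof -
  interpret mans_three_generated m a b t
    using assms(3-6) by unfold_locales
  have S_eq: "S = monoid_gen {int m, n1, n2}"
    by (simp add: S_def n1_def n2_def)
  have "PF S = (\<lambda>x. x - int m) ` Maximals S (Apery S (int m))"
    using assms(1) unfolding S_def
    by (intro PF_eq_Maximals_Apery monoid_gen_add_closed) (simp_all add: monoid_gen_generator)
  moreover have "w (m - 1) \<in> Maximals S (Apery S (int m))"
    using w_last_in_Maximals S_eq by simp
  moreover have "Maximals S (Apery S (int m)) \<subseteq> {w (m - 1), w ((m - 1) div t * t - 1)}"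
    using Maximals_Apery_subset S_eq by simp
  ultimately show ?thesis
    unfolding q_def r_def w_last w_last_block_end by auto
qed

end
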